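(* Let $\varphi=(\mathfrak{m}_1,\dots,\mathfrak{m}_\ell)$ be a normalizer-adapted decomposition. Fix $1\le p\le\ell_0$ and $1\le i\le\ell$. If there exists $1\le j\le\ell$ with $[pij]>0$, then $[pik]=0$ for every $k\in\{1,\dots,\ell\}\setminus\{j\}$. Consequently $\mathfrak{m}_i\simeq\mathfrak{m}_j$ as $\mathrm{Ad}(\mathsf{H})$-modules and $\mathrm{ad}(V_p)(\mathfrak{m}_i)=\mathfrak{m}_j$.
   Context: $M=\mathsf{G}/\mathsf{H}$ almost-effective, $\mathsf{G},\mathsf{H}$ compact connected; $Q$ an $\mathrm{Ad}(\mathsf{G})$-invariant inner product on $\mathfrak{g}$, $\mathfrak{m}=\mathfrak{h}^{\perp_Q}$, $\mathfrak{m}_0=\{X\in\mathfrak{m}:[\mathfrak{h},X]=0\}$. $\varphi=(\mathfrak{m}_1,\dots,\mathfrak{m}_\ell)$ is an ordered $Q$-orthogonal decomposition of $\mathfrak{m}$ into irreducible $\mathrm{Ad}(\mathsf{H})$-submodules, ordered so that $\mathfrak{m}_0=\mathfrak{m}_1+\dots+\mathfrak{m}_{\ell_0}$ with $\dim\mathfrak{m}_p=1$ for $p\le\ell_0$; $V_p\in\mathfrak{m}_p$ with $Q(V_p,V_p)=1$. $[ijk]=\sum Q([e_\alpha,e_\beta],e_\gamma)^2$ over a $Q$-orthonormal $\varphi$-adapted basis with $e_\alpha\in\mathfrak{m}_i,e_\beta\in\mathfrak{m}_j,e_\gamma\in\mathfrak{m}_k$. $\varphi$ is normalizer-adapted if for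 every $1\le p\le\ell_0$ and $1\le i\le\ell$ with $[\mathfrak{m}_p,\mathfrak{m}_i]\ne\{0\}$ there is $j$ with $[\mathfrak{m}_p,\mathfrak{m}_i]\cap\mathfrak{m}_j\neq\{0\}$. *)

theory Defs
  imports "HOL-Analysis.Analysis"
begin

text \<open>The Lie algebra g of the compact connected group G is
  a finite-dimensional real inner product space (type 'a :: euclidean_space) whose
  inner product plays the role of the Ad(G)-invariant inner product Q; br is the
  Lie bracket; h is the Lie algebra of H.\<close>

definition compact_lie_algebra :: "('a::euclidean_space \<Rightarrow> 'a \<Rightarrow> 'a) \<Rightarrow> bool" where
  "compact_lie_algebra br \<longleftrightarrow>
     bilinear br \<and>
     (\<forall>x y. br x y = - br y x) \<and>
     (\<forall>x y z. br x (br y z) + br y (br z x) + br z (br x y) = 0) \<and>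
     (\<forall>x y z. inner (br x y) z + inner y (br x z) = 0)"

definition lie_subalgebra :: "('a::euclidean_space \<Rightarrow> 'a \<Rightarrow> 'a) \<Rightarrow> 'a set \<Rightarrow> bool" where
  "lie_subalgebra br h \<longleftrightarrow> subspace h \<and> (\<forall>x\<in>h. \<forall>y\<in>h. br x y \<in> h)"

text \<open>Ideals of g; almost-effectiveness of G/H means h contains no nonzero ideal of g.\<close>
definition lie_ideal :: "('a::euclidean_space \<Rightarrow> 'a \<Rightarrow> 'a) \<Rightarrow> 'a set \<Rightarrow> bool" where
  "lie_ideal br I \<longleftrightarrow> subspace I \<and> (\<forall>x. \<forall>y\<in>I. br x y \<in> I)"

definition almost_effective :: "('a::euclidean_space \<Rightarrow> 'a \<Rightarrow> 'a) \<Rightarrow> 'a set \<Rightarrow> bool" where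
  "almost_effective br h \<longleftrightarrow> (\<forall>I. lie_ideal br I \<and> I \<subseteq> h \<longrightarrow> I = {0})"

definition mcomp :: "'a::euclidean_space set \<Rightarrow> 'a set" where
  "mcomp h = {x. \<forall>y\<in>h. inner x y = 0}"

definition mzero :: "('a::euclidean_space \<Rightarrow> 'a \<Rightarrow> 'a) \<Rightarrow> 'a set \<Rightarrow> 'a set" where
  "mzero br h = {x \<in> mcomp h. \<forall>y\<in>h. br y x = 0}"

text \<open>Ad(H)-submodules (H connected: equivalently ad(h)-invariant subspaces).\<close>
definition h_submodule :: "('a::euclidean_space \<Rightarrow> 'a \<Rightarrow> 'a) \<Rightarrow> 'a set \<Rightarrow> 'a set \<Rightarrow> bool" where
  "h_submodule br h W \<longleftrightarrow> subspace W \<and> (\<forall>y\<in>h. \<forall>x\<in>W. br y x \<in> W)"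

definition h_irreducible :: "('a::euclidean_space \<Rightarrow> 'a \<Rightarrow> 'a) \<Rightarrow> 'a set \<Rightarrow> 'a set \<Rightarrow> bool" where
  "h_irreducible br h W \<longleftrightarrow> h_submodule br h W \<and> W \<noteq> {0} \<and>
     (\<forall>U. h_submodule br h U \<and> U \<subseteq> W \<longrightarrow> U = {0} \<or> U = W)"

definition h_module_iso :: "('a::euclidean_space \<Rightarrow> 'a \<Rightarrow> 'a) \<Rightarrow> 'a set \<Rightarrow> 'a set \<Rightarrow> 'a set \<Rightarrow> bool" where
  "h_module_iso br h A B \<longleftrightarrow>
     (\<exists>f. linear f \<and> bij_betw f A B \<and> (\<forall>y\<in>h. \<forall>x\<in>A. f (br y x) = br y (f x)))"

definition decomposition ::
  "('a::euclidean_space \<Rightarrow> 'a \<Rightarrow> 'a) \<Rightarrow> 'a set \<Rightarrow> (nat \<Rightarrow> 'a set) \<Rightarrow> nat \<Rightarrow> nat \<Rightarrow> bool" where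
  "decomposition br h ms l l0 \<longleftrightarrow>
     (\<forall>i\<in>{1..l}. h_irreducible br h (ms i) \<and> ms i \<subseteq> mcomp h) \<and>
     (\<forall>i\<in>{1..l}. \<forall>j\<in>{1..l}. i \<noteq> j \<longrightarrow> (\<forall>x\<in>ms i. \<forall>y\<in>ms j. inner x y = 0)) \<and>
     span (\<Union>i\<in>{1..l}. ms i) = mcomp h \<and>
     l0 \<le> l \<and>
     (\<forall>p\<in>{1..l0}. dim (ms p) = 1) \<and>
     span (\<Union>p\<in>{1..l0}. ms p) = mzero br h"

definition bracket_space :: "('a::euclidean_space \<Rightarrow> 'a \<Rightarrow> 'a) \<Rightarrow> 'a set \<Rightarrow> 'a set \<Rightarrow> 'a set" where
  "bracket_space br A B = span {br x y | x y. x \<in> A \<and> y \<in> B}"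

definition normalizer_adapted ::
  "('a::euclidean_space \<Rightarrow> 'a \<Rightarrow> 'a) \<Rightarrow> 'a set \<Rightarrow> (nat \<Rightarrow> 'a set) \<Rightarrow> nat \<Rightarrow> nat \<Rightarrow> bool" where
  "normalizer_adapted br h ms l l0 \<longleftrightarrow>
     decomposition br h ms l l0 \<and>
     (\<forall>p\<in>{1..l0}. \<forall>i\<in>{1..l}. bracket_space br (ms p) (ms i) \<noteq> {0} \<longrightarrow>
        (\<exists>j\<in>{1..l}. bracket_space br (ms p) (ms i) \<inter> ms j \<noteq> {0}))"

definition is_onb :: "'a::euclidean_space set \<Rightarrow> 'a set \<Rightarrow> bool" where
  "is_onb S B \<longleftrightarrow> finite B \<and> B \<subseteq> S \<and> span B = S \<and> pairwise orthogonal B \<and>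
     (\<forall>b\<in>B. norm b = 1)"

definition onb :: "'a::euclidean_space set \<Rightarrow> 'a set" where
  "onb S = (SOME B. is_onb S B)"

definition struct_const ::
  "('a::euclidean_space \<Rightarrow> 'a \<Rightarrow> 'a) \<Rightarrow> (nat \<Rightarrow> 'a set) \<Rightarrow> nat \<Rightarrow> nat \<Rightarrow> nat \<Rightarrow> real" where
  "struct_const br ms i j k =
     (\<Sum>a\<in>onb (ms i). \<Sum>b\<in>onb (ms j). \<Sum>c\<in>onb (ms k). (inner (br a b) c)\<^sup>2)"

end

theory Submission
  imports Defs
begin

text \<open>Since \<open>V\<close> lies in \<open>m\<^sub>0\<close>, it is centralised by \<open>h\<close>, so by the Jacobi identity
  \<open>ad(V)\<close> commutes with \<open>ad(h)\<close>. As \<open>m\<^sub>p\<close> is spanned by \<open>V\<close>, \<open>[m\<^sub>p, m\<^sub>i] = ad(V)(m\<^sub>i)\<close>,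
  an \<open>h\<close>-submodule. A nonzero structure constant \<open>[pij]\<close> makes it nonzero, so by
  normalizer-adaptedness it meets some \<open>m\<^sub>j\<^sub>'\<close> nontrivially, and Schur's lemma gives
  \<open>ad(V)(m\<^sub>i) = m\<^sub>j\<^sub>'\<close> with \<open>ad(V)\<close> injective on \<open>m\<^sub>i\<close>. Orthogonality of the \<open>m\<^sub>k\<close> then
  forces \<open>j' = j\<close> and \<open>[pik] = 0\<close> for \<open>k \<noteq> j\<close>.\<close>

lemma is_onb_onb:
  fixes S :: "'a::euclidean_space set"
  assumes "subspace S"
  shows "is_onb S (onb S)"
proof -
  obtain B where "B \<subseteq> S" "pairwise orthogonal B" "\<And>x. x \<in> B \<Longrightarrow> norm x = 1"
    "independent B" "span B = S"
    using orthonormal_basis_subspace[OF assms] by metis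
  then have "is_onb S B" unfolding is_onb_def using independent_imp_finite by blast
  then show ?thesis unfolding onb_def by (rule someI)
qed

lemma bracket_mem_bracket_space:
  assumes "x \<in> A" and "y \<in> B"
  shows "br x y \<in> bracket_space br A B"
  unfolding bracket_space_def using assms by (blast intro: span_base)

lemma struct_const_eq_0I:
  assumes "subspace (ms i)" "subspace (ms j)" "subspace (ms k)"
    and "\<And>x z. x \<in> bracket_space br (ms i) (ms j) \<Longrightarrow> z \<in> ms k \<Longrightarrow> inner x z = 0"
  shows "struct_const br ms i j k = 0"
proof -
  have onb_subset: "onb (ms n) \<subseteq> ms n" if "subspace (ms n)" for n
    using is_onb_onb[OF that] by (simp add: is_onb_def)
  have "inner (br a b) c = 0" if "a \<in> onb (ms i)" "b \<in> onb (ms j)" "c \<in> onb (ms k)" for a b c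
  proof (rule assms(4))
    show "br a b \<in> bracket_space br (ms i) (ms j)"
      using that(1,2) onb_subset[OF assms(1)] onb_subset[OF assms(2)]
      by (intro bracket_mem_bracket_space) auto
    show "c \<in> ms k"
      using that(3) onb_subset[OF assms(3)] by auto
  qed
  then show ?thesis
    unfolding struct_const_def by simp
qed

definition h_equivariant ::
  "('a::euclidean_space \<Rightarrow> 'a \<Rightarrow> 'a) \<Rightarrow> 'a set \<Rightarrow> ('a \<Rightarrow> 'a) \<Rightarrow> bool" where
  "h_equivariant br h f \<longleftrightarrow> linear f \<and> (\<forall>y\<in>h. \<forall>x. f (br y x) = br y (f x))"

lemma h_equivariant_ad_centralizing:
  assumes "compact_lie_algebra br" and "\<And>y. y \<in> h \<Longrightarrow> br y V = 0"
  shows "h_equivariant br h (br V)"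
proof -
  have bil: "bilinear br"
    and skew: "\<And>x y. br x y = - br y x"
    and jacobi: "\<And>x y z. br x (br y z) + br y (br z x) + br z (br x y) = 0"
    using assms(1) unfolding compact_lie_algebra_def by blast+
  have "br y (br V x) = br V (br y x)" if "y \<in> h" for x y
  proof -
    have "br x (br y V) = 0"
      using assms(2)[OF that] bilinear_rzero[OF bil] by simp
    moreover have "br V (br x y) = - br V (br y x)"
      using skew[of x y] bilinear_rneg[OF bil] by simp
    ultimately show ?thesis
      using jacobi[of y V x] by (simp add: algebra_simps)
  qed
  moreover have "linear (br V)"
    using bil by (simp add: bilinear_def)
  ultimately show ?thesis
    unfolding h_equivariant_def by simp
qed

lemma h_module_iso_if_equivariant_bij:
  assumes "h_equivariant br h f" and "bij_betw f A B"
  shows "h_module_iso br h A B"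
  using assms unfolding h_equivariant_def h_module_iso_def by blast

lemma h_submodule_image:
  assumes f: "h_equivariant br h f" and A: "h_submodule br h A"
  shows "h_submodule br h (f ` A)"
proof -
  have "linear f" and "subspace A"
    using f A by (simp_all add: h_equivariant_def h_submodule_def)
  then have "subspace (f ` A)"
    by (rule linear_subspace_image)
  moreover have "br y (f x) \<in> f ` A" if "y \<in> h" and "x \<in> A" for x y
  proof -
    have "f (br y x) \<in> f ` A"
      using A that by (simp add: h_submodule_def)
    then show ?thesis
      using f that(1) by (simp add: h_equivariant_def)
  qed
  ultimately show ?thesis
    by (auto simp: h_submodule_def)
qed

lemma h_submodule_vimage:
  assumes f: "h_equivariant br h f" and A: "h_submodule br h A" and B: "h_submodule br h B"
  shows "h_submodule br h (A \<inter> f -` B)"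
proof -
  have "linear f" and "subspace A" and "subspace B"
    using f A B by (simp_all add: h_equivariant_def h_submodule_def)
  then have "subspace (A \<inter> f -` B)"
    by (simp add: subspace_inter linear_subspace_vimage)
  moreover have "br y x \<in> A \<inter> f -` B" if "y \<in> h" and "x \<in> A \<inter> f -` B" for x y
    using f A B that by (simp add: h_equivariant_def h_submodule_def)
  ultimately show ?thesis
    by (simp add: h_submodule_def)
qed

lemma h_submodule_zero:
  assumes "bilinear br"
  shows "h_submodule br h {0}"
  using bilinear_rzero[OF assms] by (simp add: h_submodule_def)

lemma h_irreducible_eqI:
  assumes "h_irreducible br h W" and "h_submodule br h U" and "U \<subseteq> W" and "U \<noteq> {0}"
  shows "U = W"
  using assms unfolding h_irreducible_def by blast

lemma h_irreducible_image_eq: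
  assumes f: "h_equivariant br h f"
    and A: "h_irreducible br h A" and B: "h_irreducible br h B"
    and meet: "f ` A \<inter> B \<noteq> {0}"
  shows "f ` A = B"
proof -
  have lin: "linear f" and modA: "h_submodule br h A" and modB: "h_submodule br h B"
    using f A B by (simp_all add: h_equivariant_def h_irreducible_def)
  have "0 \<in> A" and "0 \<in> B" and "f 0 = 0"
    using modA modB linear_0[OF lin] by (simp_all add: h_submodule_def subspace_0)
  then have "0 \<in> f ` A \<inter> B"
    by force
  with meet obtain x where x: "x \<in> A" "f x \<in> B" "f x \<noteq> 0"
    by blast
  with \<open>f 0 = 0\<close> have "x \<in> A \<inter> f -` B" and "x \<noteq> 0"
    by auto
  then have "A \<inter> f -` B = A"
    using h_irreducible_eqI[OF A h_submodule_vimage[OF f modA modB]] by blast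
  then have "f ` A \<subseteq> B"
    by (metis Int_lower2 image_subset_iff_subset_vimage)
  moreover have "f ` A \<noteq> {0}"
    using x by blast
  ultimately show ?thesis
    using h_irreducible_eqI[OF B h_submodule_image[OF f modA]] by blast
qed

lemma h_irreducible_inj_on:
  assumes "bilinear br" and f: "h_equivariant br h f"
    and A: "h_irreducible br h A" and nonzero: "f ` A \<noteq> {0}"
  shows "inj_on f A"
proof -
  have lin: "linear f" and modA: "h_submodule br h A"
    using f A by (simp_all add: h_equivariant_def h_irreducible_def)
  have kernel: "A \<inter> f -` {0} = {0}"
  proof (rule ccontr)
    assume "A \<inter> f -` {0} \<noteq> {0}"
    then have "A \<inter> f -` {0} = A"
      by (rule h_irreducible_eqI[OF A h_submodule_vimage[OF f modA h_submodule_zero[OF assms(1)]]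
            Int_lower1])
    then have "f ` A \<subseteq> {0}"
      by (metis Int_lower2 image_subset_iff_subset_vimage)
    moreover have "0 \<in> A"
      using modA by (simp add: h_submodule_def subspace_0)
    ultimately show False
      using nonzero by (auto simp: subset_singleton_iff)
  qed
  have "\<forall>x\<in>A. f x = 0 \<longrightarrow> x = 0"
  proof (intro ballI impI)
    fix x assume "x \<in> A" and "f x = 0"
    then have "x \<in> A \<inter> f -` {0}"
      by simp
    then show "x = 0"
      using kernel by simp
  qed
  then show ?thesis
    using modA lin by (simp add: h_submodule_def linear_injective_on_subspace_0)
qed

lemma bracket_space_span_singleton:
  assumes "bilinear br" and "subspace B"
  shows "bracket_space br (span {V}) B = br V ` B"
proof -
  have "{br x y | x y. x \<in> span {V} \<and> y \<in> B} = br V ` B"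
  proof (intro subset_antisym subsetI)
    fix z assume "z \<in> {br x y | x y. x \<in> span {V} \<and> y \<in> B}"
    then obtain t y where "z = br (t *\<^sub>R V) y" and y: "y \<in> B"
      by (auto simp: span_singleton)
    then have "z = br V (t *\<^sub>R y)"
      using bilinear_lmul[OF assms(1)] bilinear_rmul[OF assms(1)] by simp
    moreover have "t *\<^sub>R y \<in> B"
      using subspace_scale[OF assms(2) y] .
    ultimately show "z \<in> br V ` B"
      by blast
  next
    fix z assume "z \<in> br V ` B"
    then show "z \<in> {br x y | x y. x \<in> span {V} \<and> y \<in> B}"
      by (auto intro: span_base)
  qed
  moreover have "linear (br V)"
    using assms(1) by (simp add: bilinear_def)
  then have "subspace (br V ` B)"
    using assms(2) by (rule linear_subspace_image)
  ultimately show ?thesis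
    by (simp add: bracket_space_def span_eq_iff)
qed

lemma decomposition_subspace:
  assumes "decomposition br h ms l l0" and "k \<in> {1..l}"
  shows "subspace (ms k)"
  using assms by (simp add: decomposition_def h_irreducible_def h_submodule_def)

lemma decomposition_orthogonal:
  assumes "decomposition br h ms l l0" and "k \<in> {1..l}" "k' \<in> {1..l}" "k \<noteq> k'"
    and "x \<in> ms k" "y \<in> ms k'"
  shows "inner x y = 0"
proof -
  have "\<forall>k\<in>{1..l}. \<forall>k'\<in>{1..l}. k \<noteq> k' \<longrightarrow> (\<forall>x\<in>ms k. \<forall>y\<in>ms k'. inner x y = 0)"
    using assms(1) by (simp add: decomposition_def)
  then show ?thesis
    using assms(2-6) by blast
qed

lemma decomposition_struct_const_eq_0:
  assumes dec: "decomposition br h ms l l0"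
    and "i \<in> {1..l}" "j \<in> {1..l}" "k \<in> {1..l}" "k' \<in> {1..l}" "k \<noteq> k'"
    and brackets: "bracket_space br (ms i) (ms j) \<subseteq> ms k'"
  shows "struct_const br ms i j k = 0"
proof (rule struct_const_eq_0I)
  show "subspace (ms i)" "subspace (ms j)" "subspace (ms k)"
    using assms(2-4) by (simp_all add: decomposition_subspace[OF dec])
  fix x z assume "x \<in> bracket_space br (ms i) (ms j)" and z: "z \<in> ms k"
  with brackets have "x \<in> ms k'"
    by blast
  then show "inner x z = 0"
    using decomposition_orthogonal[OF dec assms(5,4)] assms(6) z by simp
qed

lemma decomposition_centralizes:
  assumes "decomposition br h ms l l0" and "p \<in> {1..l0}" and "V \<in> ms p" and "y \<in> h"
  shows "br y V = 0"
proof -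
  have "V \<in> span (\<Union>p\<in>{1..l0}. ms p)"
    using assms(2,3) by (blast intro: span_base)
  then show ?thesis
    using assms(1,4) by (simp add: decomposition_def mzero_def)
qed

lemma decomposition_eq_span_singleton:
  assumes "decomposition br h ms l l0" and "p \<in> {1..l0}" and "V \<in> ms p" and "V \<noteq> 0"
  shows "ms p = span {V}"
proof -
  have "subspace (ms p)" and "dim (ms p) = 1"
    using assms(1,2) by (auto simp: decomposition_def h_irreducible_def h_submodule_def)
  moreover have "span {V} = span (ms p)"
    using assms(3,4) \<open>dim (ms p) = 1\<close> by (intro dim_eq_span) auto
  moreover have "span (ms p) = ms p"
    using \<open>subspace (ms p)\<close> by simp
  ultimately show ?thesis
    by simp
qed

lemma normalizer_adapted_bracket_space:
  assumes "compact_lie_algebra br" and na: "normalizer_adapted br h ms l l0"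
    and "p \<in> {1..l0}" and i: "i \<in> {1..l}" and "V \<in> ms p" and "V \<noteq> 0"
    and nonzero: "bracket_space br (ms p) (ms i) \<noteq> {0}"
  obtains j where "j \<in> {1..l}" and "bracket_space br (ms p) (ms i) = ms j"
    and "br V ` ms i = ms j" and "h_module_iso br h (ms i) (ms j)"
proof -
  have bil: "bilinear br"
    using assms(1) by (simp add: compact_lie_algebra_def)
  have dec: "decomposition br h ms l l0"
    using na by (simp add: normalizer_adapted_def)
  then have irr: "\<And>k. k \<in> {1..l} \<Longrightarrow> h_irreducible br h (ms k)"
    by (simp add: decomposition_def)
  have adV: "h_equivariant br h (br V)"
    using h_equivariant_ad_centralizing[OF assms(1)] decomposition_centralizes[OF dec assms(3,5)] .
  have brackets: "bracket_space br (ms p) (ms i) = br V ` ms i"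
    using decomposition_eq_span_singleton[OF dec assms(3,5,6)]
      bracket_space_span_singleton[OF bil decomposition_subspace[OF dec i]] by simp
  have "\<forall>p\<in>{1..l0}. \<forall>i\<in>{1..l}. bracket_space br (ms p) (ms i) \<noteq> {0} \<longrightarrow>
          (\<exists>j\<in>{1..l}. bracket_space br (ms p) (ms i) \<inter> ms j \<noteq> {0})"
    using na by (simp add: normalizer_adapted_def)
  then have "\<exists>j\<in>{1..l}. bracket_space br (ms p) (ms i) \<inter> ms j \<noteq> {0}"
    using assms(3) i nonzero by blast
  then obtain j where j: "j \<in> {1..l}" "br V ` ms i \<inter> ms j \<noteq> {0}"
    unfolding brackets by blast
  then have image: "br V ` ms i = ms j"
    by (rule h_irreducible_image_eq[OF adV irr[OF i] irr])
  have "inj_on (br V) (ms i)"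
    using h_irreducible_inj_on[OF bil adV irr[OF i]] nonzero brackets by simp
  with image have "bij_betw (br V) (ms i) (ms j)"
    by (simp add: bij_betw_def)
  then have "h_module_iso br h (ms i) (ms j)"
    by (rule h_module_iso_if_equivariant_bij[OF adV])
  with j(1) image brackets show thesis
    using that by simp
qed

theorem lemma5p2:
  fixes br :: "'a::euclidean_space \<Rightarrow> 'a \<Rightarrow> 'a"
    and h :: "'a set" and ms :: "nat \<Rightarrow> 'a set" and l l0 p i j :: nat and V :: 'a
  assumes "compact_lie_algebra br"
    and "lie_subalgebra br h"
    and "almost_effective br h"
    and "normalizer_adapted br h ms l l0"
    and "p \<in> {1..l0}" and "i \<in> {1..l}"
    and "V \<in> ms p" and "inner V V = 1"
    and "j \<in> {1..l}" and "struct_const br ms p i j > 0"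
  shows "(\<forall>k\<in>{1..l} - {j}. struct_const br ms p i k = 0) \<and>
         h_module_iso br h (ms i) (ms j) \<and>
         br V ` ms i = ms j"
proof -
  have dec: "decomposition br h ms l l0"
    using assms(4) by (simp add: normalizer_adapted_def)
  then have p: "p \<in> {1..l}"
    using assms(5) by (auto simp: decomposition_def)
  have subspaces: "subspace (ms p)" "subspace (ms i)" "subspace (ms j)"
    using p assms(6,9) by (simp_all add: decomposition_subspace[OF dec])
  have "V \<noteq> 0"
    using assms(8) by auto
  moreover have "bracket_space br (ms p) (ms i) \<noteq> {0}"
  proof
    assume "bracket_space br (ms p) (ms i) = {0}"
    then have "struct_const br ms p i j = 0"
      by (intro struct_const_eq_0I[OF subspaces]) simp
    with assms(10) show False
      by simp
  qed
  ultimately obtain j' where j': "j' \<in> {1..l}" "bracket_space br (ms p) (ms i) = ms j'"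
    "br V ` ms i = ms j'" "h_module_iso br h (ms i) (ms j')"
    by (rule normalizer_adapted_bracket_space[OF assms(1,4,5,6,7)])
  have vanish: "struct_const br ms p i k = 0" if "k \<in> {1..l} - {j'}" for k
    using that j'(2) by (intro decomposition_struct_const_eq_0[OF dec p assms(6) _ j'(1)]) auto
  have "j' = j"
  proof (rule ccontr)
    assume "j' \<noteq> j"
    then have "struct_const br ms p i j = 0"
      using vanish assms(9) by simp
    with assms(10) show False
      by simp
  qed
  with j' vanish show ?thesis
    by auto
qed

end
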